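(* Let $(X,d)$ be a complete metric space and let $T\colon X\to X$ satisfy (CM): for all $x,y\in X$, $x\neq y$ implies $d(Tx,Ty)<\frac{1}{2}\{d(x,Tx)+d(y,Ty)\}$. Then the following are equivalent: (i) for every $x\in X$ and every $\varepsilon>0$ there exists $\delta>0$ such that for all $i,j\in\mathbb{N}\cup\{0\}$, $\frac{1}{2}\{d(T^ix,T^{i+1}x)+d(T^jx,T^{j+1}x)\}<\varepsilon+\delta$ implies $d(T^{i+1}x,T^{j+1}x)\le\varepsilon$; (ii) $T$ has a unique fixed point $z\in X$ and the sequence $(T^nx)_{n}$ converges to $z$ for every $x\in X$.
   Context: $T^n$ denotes the $n$-fold composition of $T$, with $T^0$ the identity; $\mathbb{N}=\{1,2,3,\dots\}$. *)

theory Defs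
  imports "HOL-Analysis.Analysis"
begin

end

theory Submission
  imports Defs
begin

text \<open>
  Along an orbit \<open>x\<^sub>n = T\<^sup>n x\<close> the steps \<open>a\<^sub>n = d(x\<^sub>n, x\<^sub>n\<^sub>+\<^sub>1)\<close> decrease, strictly while
  positive, and the contractive condition gives \<open>d(x\<^sub>i\<^sub>+\<^sub>1, x\<^sub>j\<^sub>+\<^sub>1) \<le> (a\<^sub>i + a\<^sub>j)/2\<close>.
  If (i) holds and \<open>a\<^sub>n\<close> decreased to \<open>r > 0\<close>, then (i) with \<open>\<epsilon> = r\<close> would force some
  step to equal \<open>r\<close>, and the next step would drop below \<open>r\<close>; so \<open>a\<^sub>n \<rightarrow> 0\<close>, the orbit is
  Cauchy, and its limit is a fixed point, unique by the contractive condition.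
  Conversely, if the orbit converges to the fixed point \<open>z\<close>, the pairs \<open>(x\<^sub>n, x\<^sub>n\<^sub>+\<^sub>1)\<close>
  together with \<open>(z, z)\<close> form a compact subset of the graph of \<open>T\<close>. On pairs of its
  points \<open>(u, Tu), (v, Tv)\<close> with \<open>d(Tu, Tv) \<ge> \<epsilon>\<close> the continuous quantity
  \<open>(d(u, Tu) + d(v, Tv))/2\<close> exceeds \<open>\<epsilon>\<close>, hence exceeds \<open>\<epsilon> + \<delta>\<close> for a uniform \<open>\<delta> > 0\<close>.
\<close>

lemma compact_insert_limit_range:
  assumes "f \<longlonglongrightarrow> l"
  shows "compact (insert l (range f))"
  using compactin_sequence_with_limit[of euclidean f l "range f"] assms by simp

lemma compact_uniform_margin:
  fixes g h :: "'a::t2_space \<Rightarrow> real"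
  assumes "compact S" "continuous_on S g" "continuous_on S h"
    and margin: "\<And>p. p \<in> S \<Longrightarrow> \<epsilon> \<le> h p \<Longrightarrow> \<epsilon> < g p"
  shows "\<exists>\<delta>>0. \<forall>p\<in>S. g p < \<epsilon> + \<delta> \<longrightarrow> h p \<le> \<epsilon>"
proof -
  define C where "C = S \<inter> h -` {\<epsilon>..}"
  have "closed C"
    unfolding C_def using assms(1,3) by (intro continuous_closed_preimage) (auto intro: compact_imp_closed)
  moreover have "S \<inter> C = C" by (auto simp: C_def)
  ultimately have "compact C"
    using compact_Int_closed[OF \<open>compact S\<close>, of C] by simp
  show ?thesis
  proof (cases "C = {}")
    case True
    then show ?thesis by (intro exI[of _ 1]) (force simp: C_def)
  next
    case False
    obtain p0 where "p0 \<in> C" and p0_min: "\<forall>p\<in>C. g p0 \<le> g p"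
      using continuous_attains_inf[OF \<open>compact C\<close> False] continuous_on_subset[OF assms(2)]
      unfolding C_def by blast
    then have "\<epsilon> < g p0" using margin unfolding C_def by auto
    moreover have "h p \<le> \<epsilon>" if "p \<in> S" "g p < g p0" for p
      using p0_min that unfolding C_def by force
    ultimately show ?thesis by (intro exI[of _ "g p0 - \<epsilon>"]) auto
  qed
qed

definition orbit_margin_condition :: "('a::metric_space \<Rightarrow> 'a) \<Rightarrow> 'a \<Rightarrow> bool" where
  "orbit_margin_condition T x \<longleftrightarrow> (\<forall>\<epsilon>>0. \<exists>\<delta>>0. \<forall>i j :: nat.
      (dist ((T ^^ i) x) ((T ^^ (i+1)) x) + dist ((T ^^ j) x) ((T ^^ (j+1)) x)) / 2 < \<epsilon> + \<delta>
      \<longrightarrow> dist ((T ^^ (i+1)) x) ((T ^^ (j+1)) x) \<le> \<epsilon>)"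

locale kannan_contractive =
  fixes T :: "'a::metric_space \<Rightarrow> 'a"
  assumes contractive: "x \<noteq> y \<Longrightarrow> dist (T x) (T y) < (dist x (T x) + dist y (T y)) / 2"
begin

lemma dist_le: "dist (T x) (T y) \<le> (dist x (T x) + dist y (T y)) / 2"
  using contractive[of x y] by (cases "x = y") auto

lemma fixed_point_unique: "T z = z \<Longrightarrow> T w = w \<Longrightarrow> z = w"
  using contractive[of z w] by force

lemma dist_step_le: "dist (T x) (T (T x)) \<le> dist x (T x)"
  using dist_le[of x "T x"] by simp

lemma dist_step_less: "x \<noteq> T x \<Longrightarrow> dist (T x) (T (T x)) < dist x (T x)"
  using contractive[of x "T x"] by simp

lemma orbit_steps_tendsto_zero:
  assumes "orbit_margin_condition T x"
  shows "(\<lambda>n. dist ((T ^^ n) x) ((T ^^ Suc n) x)) \<longlonglongrightarrow> 0"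
proof -
  define a where "a n = dist ((T ^^ n) x) ((T ^^ Suc n) x)" for n
  have "decseq a"
    unfolding decseq_Suc_iff a_def using dist_step_le by simp
  then obtain r where lim: "a \<longlonglongrightarrow> r" and r_le: "\<And>n. r \<le> a n"
    using decseq_convergent[of a 0] unfolding a_def by auto
  have "r = 0"
  proof (rule ccontr)
    assume "r \<noteq> 0"
    moreover have "r \<ge> 0" using LIMSEQ_le_const[OF lim] by (simp add: a_def)
    ultimately have "r > 0" by simp
    with assms obtain \<delta> where "\<delta> > 0" and \<delta>:
      "\<And>i j. (a i + a j) / 2 < r + \<delta> \<Longrightarrow> dist ((T ^^ (i+1)) x) ((T ^^ (j+1)) x) \<le> r"
      unfolding orbit_margin_condition_def a_def by auto
    obtain i where "a i < r + \<delta>"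
      using order_tendstoD(2)[OF lim, of "r + \<delta>"] \<open>\<delta> > 0\<close> by (auto simp: eventually_sequentially)
    moreover have "a (Suc i) \<le> a i" using \<open>decseq a\<close> by (simp add: decseq_Suc_iff)
    ultimately have "a (Suc i) \<le> r" using \<delta>[of i "Suc i"] by (simp add: a_def)
    moreover have "a (Suc (Suc i)) < a (Suc i)"
      using dist_step_less[of "(T ^^ Suc i) x"] r_le[of "Suc i"] \<open>r > 0\<close> by (force simp: a_def)
    ultimately show False using r_le[of "Suc (Suc i)"] by linarith
  qed
  then show ?thesis using lim unfolding a_def by simp
qed

lemma orbit_Cauchy:
  assumes "(\<lambda>n. dist ((T ^^ n) x) ((T ^^ Suc n) x)) \<longlonglongrightarrow> 0"
  shows "Cauchy (\<lambda>n. (T ^^ n) x)"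
proof (rule metric_CauchyI)
  fix e :: real assume "e > 0"
  then obtain N where N: "\<And>n. n \<ge> N \<Longrightarrow> dist ((T ^^ n) x) ((T ^^ Suc n) x) < e"
    using order_tendstoD(2)[OF assms] by (auto simp: eventually_sequentially)
  have shifted: "dist ((T ^^ Suc i) x) ((T ^^ Suc j) x) < e" if "i \<ge> N" "j \<ge> N" for i j
    using dist_le[of "(T ^^ i) x" "(T ^^ j) x"] N[OF that(1)] N[OF that(2)] by simp
  have "dist ((T ^^ m) x) ((T ^^ n) x) < e" if "m \<ge> Suc N" "n \<ge> Suc N" for m n
    using shifted[of "m - 1" "n - 1"] that by (simp add: Suc_diff_1)
  then show "\<exists>M. \<forall>m\<ge>M. \<forall>n\<ge>M. dist ((T ^^ m) x) ((T ^^ n) x) < e" by blast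
qed

lemma orbit_limit_fixed_point:
  assumes lim: "(\<lambda>n. (T ^^ n) x) \<longlonglongrightarrow> z"
  shows "T z = z"
proof -
  have lim_Suc: "(\<lambda>n. (T ^^ Suc n) x) \<longlonglongrightarrow> z"
    using LIMSEQ_Suc[OF lim] .
  have "dist z (T z) \<le> 2 * dist z ((T ^^ Suc n) x) + dist ((T ^^ n) x) ((T ^^ Suc n) x)" for n
    using dist_triangle[of z "T z" "(T ^^ Suc n) x"] dist_le[of "(T ^^ n) x" z]
    by (simp add: dist_commute)
  moreover have "(\<lambda>n. 2 * dist z ((T ^^ Suc n) x) + dist ((T ^^ n) x) ((T ^^ Suc n) x))
      \<longlonglongrightarrow> 2 * dist z z + dist z z"
    by (intro tendsto_intros lim lim_Suc)
  ultimately have "dist z (T z) \<le> 0"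
    by (intro LIMSEQ_le_const) auto
  then show ?thesis by simp
qed

lemma orbit_margin_condition_if_converges_to_fixed_point:
  assumes "T z = z" and lim: "(\<lambda>n. (T ^^ n) x) \<longlonglongrightarrow> z"
  shows "orbit_margin_condition T x"
  unfolding orbit_margin_condition_def
proof (intro allI impI)
  fix \<epsilon> :: real assume "\<epsilon> > 0"
  define P where "P = insert (z, z) (range (\<lambda>n. ((T ^^ n) x, (T ^^ Suc n) x)))"
  define g :: "('a \<times> 'a) \<times> ('a \<times> 'a) \<Rightarrow> real"
    where "g = (\<lambda>(p, q). (dist (fst p) (snd p) + dist (fst q) (snd q)) / 2)"
  define h :: "('a \<times> 'a) \<times> ('a \<times> 'a) \<Rightarrow> real"
    where "h = (\<lambda>(p, q). dist (snd p) (snd q))"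
  have "compact P"
    unfolding P_def
    by (intro compact_insert_limit_range tendsto_Pair lim LIMSEQ_Suc[OF lim])
  have graph: "snd p = T (fst p)" if "p \<in> P" for p
    using that \<open>T z = z\<close> unfolding P_def by auto
  have "\<epsilon> < g pq" if "pq \<in> P \<times> P" "\<epsilon> \<le> h pq" for pq
  proof -
    obtain p q where pq: "pq = (p, q)" "p \<in> P" "q \<in> P" using \<open>pq \<in> P \<times> P\<close> by auto
    with that \<open>\<epsilon> > 0\<close> have "fst p \<noteq> fst q" using graph by (auto simp: h_def)
    then show ?thesis
      using contractive[of "fst p" "fst q"] that graph[OF pq(2)] graph[OF pq(3)] pq
      by (simp add: g_def h_def)
  qed
  moreover have "continuous_on (P \<times> P) g"
    unfolding g_def case_prod_unfold by (intro continuous_intros) simp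
  moreover have "continuous_on (P \<times> P) h"
    unfolding h_def case_prod_unfold by (intro continuous_intros)
  ultimately obtain \<delta> where "\<delta> > 0" and \<delta>: "\<forall>pq\<in>P \<times> P. g pq < \<epsilon> + \<delta> \<longrightarrow> h pq \<le> \<epsilon>"
    using compact_uniform_margin[of "P \<times> P" g h \<epsilon>] compact_Times[OF \<open>compact P\<close> \<open>compact P\<close>]
    by blast
  have "((T ^^ n) x, (T ^^ Suc n) x) \<in> P" for n unfolding P_def by blast
  with \<delta> show "\<exists>\<delta>>0. \<forall>i j :: nat.
      (dist ((T ^^ i) x) ((T ^^ (i+1)) x) + dist ((T ^^ j) x) ((T ^^ (j+1)) x)) / 2 < \<epsilon> + \<delta>
      \<longrightarrow> dist ((T ^^ (i+1)) x) ((T ^^ (j+1)) x) \<le> \<epsilon>"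
    by (intro exI[of _ \<delta>] conjI \<open>\<delta> > 0\<close> allI) (force simp: g_def h_def)
qed

end

theorem theorem3p1:
  fixes T :: "'a::complete_space \<Rightarrow> 'a"
  assumes CM: "\<And>x y. x \<noteq> y \<Longrightarrow> dist (T x) (T y) < (dist x (T x) + dist y (T y)) / 2"
  shows "(\<forall>x. \<forall>\<epsilon>>0. \<exists>\<delta>>0. \<forall>i j :: nat.
            (dist ((T ^^ i) x) ((T ^^ (i+1)) x) + dist ((T ^^ j) x) ((T ^^ (j+1)) x)) / 2 < \<epsilon> + \<delta>
            \<longrightarrow> dist ((T ^^ (i+1)) x) ((T ^^ (j+1)) x) \<le> \<epsilon>)
    \<longleftrightarrow> (\<exists>!z. T z = z) \<and> (\<exists>z. T z = z \<and> (\<forall>x. (\<lambda>n. (T ^^ n) x) \<longlonglongrightarrow> z))"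
proof -
  interpret kannan_contractive T using CM by unfold_locales
  have "(\<forall>x. orbit_margin_condition T x)
      \<longleftrightarrow> (\<exists>!z. T z = z) \<and> (\<exists>z. T z = z \<and> (\<forall>x. (\<lambda>n. (T ^^ n) x) \<longlonglongrightarrow> z))"
  proof
    assume margin: "\<forall>x. orbit_margin_condition T x"
    have "\<exists>z. (\<lambda>n. (T ^^ n) x) \<longlonglongrightarrow> z" for x
      using orbit_Cauchy[OF orbit_steps_tendsto_zero] margin
      by (simp add: Cauchy_convergent_iff convergent_def)
    then obtain lim where "(\<lambda>n. (T ^^ n) x) \<longlonglongrightarrow> lim x" for x by metis
    moreover from this have "T (lim x) = lim x" for x by (rule orbit_limit_fixed_point)
    ultimately show "(\<exists>!z. T z = z) \<and> (\<exists>z. T z = z \<and> (\<forall>x. (\<lambda>n. (T ^^ n) x) \<longlonglongrightarrow> z))"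
      using fixed_point_unique by metis
  next
    assume "(\<exists>!z. T z = z) \<and> (\<exists>z. T z = z \<and> (\<forall>x. (\<lambda>n. (T ^^ n) x) \<longlonglongrightarrow> z))"
    then show "\<forall>x. orbit_margin_condition T x"
      using orbit_margin_condition_if_converges_to_fixed_point by blast
  qed
  then show ?thesis unfolding orbit_margin_condition_def .
qed

end
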